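(* Let $H$ be a self-adjoint operator on a finite-dimensional Hilbert space $\mathcal{H}$ which is not the zero operator, and let $T:\mathcal{H}\rightarrow\mathcal{H}$ be an antiunitary bijection. Suppose there exists an eigenvector $\psi$ of $H$ such that (1) $T\psi \neq e^{i\theta}\psi$ for every complex unit $e^{i\theta}$, and (2) every eigenvector of $H$ orthogonal to $\psi$ has an eigenvalue different from that of $\psi$. Then $[T,H]\neq 0$, i.e. $TH\neq HT$.
   Context: An antiunitary operator $T$ is an antilinear bijection ($T(a\psi+b\phi)=a^*T\psi+b^*T\phi$) satisfying $\langle T\psi, T\phi\rangle = \langle \psi,\phi\rangle^*$ for all $\psi,\phi$. *)

theory Defs
  imports "HOL-Analysis.Analysis"
begin

text \<open>A finite-dimensional complex Hilbert space is modelled (up to unitary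
isomorphism) as \<open>complex ^ 'n\<close> for a finite index type \<open>'n\<close>, with the standard
inner product, conjugate-linear in the first argument.\<close>

definition cinner :: "complex ^ 'n \<Rightarrow> complex ^ 'n \<Rightarrow> complex" where
  "cinner x y = (\<Sum>i\<in>UNIV. cnj (x $ i) * y $ i)"

definition clinear_op :: "(complex ^ 'n \<Rightarrow> complex ^ 'n) \<Rightarrow> bool" where
  "clinear_op A \<longleftrightarrow> (\<forall>a b x y. A (a *s x + b *s y) = a *s A x + b *s A y)"

definition self_adjoint :: "(complex ^ 'n \<Rightarrow> complex ^ 'n) \<Rightarrow> bool" where
  "self_adjoint H \<longleftrightarrow> clinear_op H \<and> (\<forall>x y. cinner (H x) y = cinner x (H y))"

definition antiunitary :: "(complex ^ 'n \<Rightarrow> complex ^ 'n) \<Rightarrow> bool" where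
  "antiunitary T \<longleftrightarrow> bij T
     \<and> (\<forall>a b x y. T (a *s x + b *s y) = cnj a *s T x + cnj b *s T y)
     \<and> (\<forall>x y. cinner (T x) (T y) = cnj (cinner x y))"

definition is_eigenvector :: "(complex ^ 'n \<Rightarrow> complex ^ 'n) \<Rightarrow> complex ^ 'n \<Rightarrow> complex \<Rightarrow> bool" where
  "is_eigenvector H v l \<longleftrightarrow> v \<noteq> 0 \<and> H v = l *s v"

end

theory Submission
  imports Defs
begin

text \<open>If \<open>T\<close> commuted with \<open>H\<close>, it would map the eigenspace of the real eigenvalue \<open>l\<close>
of \<open>\<psi>\<close> into itself. Hypothesis (2) makes that eigenspace the line through \<open>\<psi>\<close>, so
\<open>T \<psi> = c \<psi>\<close>, and norm preservation forces \<open>|c| = 1\<close>, contradicting (1).\<close>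

lemma cinner_scale_right: "cinner x (a *s y) = a * cinner x y"
  by (simp add: cinner_def sum_distrib_left algebra_simps)

lemma cinner_scale_left: "cinner (a *s x) y = cnj a * cinner x y"
  by (simp add: cinner_def sum_distrib_left algebra_simps)

lemma cinner_diff_right: "cinner x (y - z) = cinner x y - cinner x z"
  by (simp add: cinner_def sum_subtractf algebra_simps)

lemma cinner_self_eq_norms: "cinner x x = of_real (\<Sum>i\<in>UNIV. (cmod (x $ i))\<^sup>2)"
  unfolding cinner_def of_real_sum
  by (rule sum.cong) (simp_all, metis complex_norm_square mult.commute of_real_power)

lemma cnj_cinner_self: "cnj (cinner x x) = cinner x x"
  by (simp add: cinner_self_eq_norms)

lemma cinner_self_eq_0_iff: "cinner x x = 0 \<longleftrightarrow> x = 0"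
proof
  assume "cinner x x = 0"
  then have "(\<Sum>i\<in>UNIV. (cmod (x $ i))\<^sup>2) = 0"
    by (metis cinner_self_eq_norms of_real_eq_0_iff)
  then show "x = 0"
    by (subst (asm) sum_nonneg_eq_0_iff) (auto simp: vec_eq_iff)
qed (simp add: cinner_def)

lemma clinear_op_diff:
  assumes "clinear_op H"
  shows "H (x - a *s y) = H x - a *s H y"
proof -
  have "H (1 *s x + (- a) *s y) = 1 *s H x + (- a) *s H y"
    using assms unfolding clinear_op_def by blast
  then show ?thesis
    by (simp add: vector_smult_lneg)
qed

lemma antiunitary_scale: "antiunitary T \<Longrightarrow> T (a *s x) = cnj a *s T x"
  unfolding antiunitary_def by (metis add.right_neutral complex_cnj_zero vector_smult_lzero)

lemma self_adjoint_eigenvalue_real: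
  assumes "self_adjoint H" and "is_eigenvector H v l"
  shows "cnj l = l"
proof -
  have v: "v \<noteq> 0" "H v = l *s v"
    using assms(2) unfolding is_eigenvector_def by auto
  have "cinner (H v) v = cinner v (H v)"
    using assms(1) unfolding self_adjoint_def by blast
  then have "cnj l * cinner v v = l * cinner v v"
    by (simp add: v cinner_scale_left cinner_scale_right)
  with v(1) show ?thesis
    by (simp add: cinner_self_eq_0_iff)
qed

lemma commuting_antiunitary_maps_eigenvector:
  assumes "antiunitary T" and "T \<circ> H = H \<circ> T" and "H v = l *s v" and "cnj l = l"
  shows "H (T v) = l *s T v"
proof -
  have "H (T v) = T (H v)"
    using assms(2) by (metis comp_apply)
  also have "\<dots> = l *s T v"
    using assms by (metis antiunitary_scale)
  finally show ?thesis .
qed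

text \<open>Subtracting from \<open>w\<close> its projection onto \<open>\<psi>\<close> leaves an eigenvector of the same
eigenvalue orthogonal to \<open>\<psi>\<close>, which must therefore vanish.\<close>

lemma simple_eigenspace_is_line:
  assumes "clinear_op H" and "\<psi> \<noteq> 0" and "H \<psi> = l *s \<psi>" and "H w = l *s w"
    and simple: "\<forall>\<phi> \<mu>. is_eigenvector H \<phi> \<mu> \<and> cinner \<psi> \<phi> = 0 \<longrightarrow> \<mu> \<noteq> l"
  shows "w = (cinner \<psi> w / cinner \<psi> \<psi>) *s \<psi>"
proof -
  define c where "c = cinner \<psi> w / cinner \<psi> \<psi>"
  define \<phi> where "\<phi> = w - c *s \<psi>"
  have "cinner \<psi> \<phi> = 0"
    using assms(2) by (simp add: \<phi>_def c_def cinner_diff_right cinner_scale_right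
        cinner_self_eq_0_iff)
  moreover have "H \<phi> = l *s \<phi>"
    by (simp add: \<phi>_def clinear_op_diff[OF assms(1)] assms(3,4) vector_smult_assoc
        vector_ssub_ldistrib mult.commute)
  ultimately have "\<phi> = 0"
    using simple unfolding is_eigenvector_def by blast
  then show ?thesis
    by (simp add: \<phi>_def c_def)
qed

lemma antiunitary_eigenvalue_unimodular:
  assumes "antiunitary T" and "v \<noteq> 0" and "T v = c *s v"
  shows "cmod c = 1"
proof -
  have "cinner (T v) (T v) = cnj (cinner v v)"
    using assms(1) unfolding antiunitary_def by blast
  then have "(c * cnj c) * cinner v v = cinner v v"
    by (simp add: assms(3) cnj_cinner_self cinner_scale_left cinner_scale_right mult.commute)
  with assms(2) have "c * cnj c = 1"
    by (simp add: cinner_self_eq_0_iff)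
  then have "(cmod c)\<^sup>2 = 1"
    by (metis complex_norm_square of_real_eq_1_iff)
  then show ?thesis
    using norm_ge_zero[of c] by (auto simp: power2_eq_1_iff)
qed

lemma unimodular_eq_exp_Arg: "cmod c = 1 \<Longrightarrow> c = exp (\<i> * complex_of_real (Arg c))"
  by (metis cis_conv_exp rcis_cmod_Arg rcis_def mult_1 of_real_1)

theorem proposition2:
  fixes H T :: "complex ^ 'n \<Rightarrow> complex ^ 'n" and \<psi> :: "complex ^ 'n" and l :: complex
  assumes "self_adjoint H"
    and "H \<noteq> (\<lambda>x. 0)"
    and "antiunitary T"
    and "is_eigenvector H \<psi> l"
    and "\<forall>\<theta>::real. T \<psi> \<noteq> exp (\<i> * complex_of_real \<theta>) *s \<psi>"
    and "\<forall>\<phi> \<mu>. is_eigenvector H \<phi> \<mu> \<and> cinner \<psi> \<phi> = 0 \<longrightarrow> \<mu> \<noteq> l"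
  shows "T \<circ> H \<noteq> H \<circ> T"
proof
  assume commute: "T \<circ> H = H \<circ> T"
  have \<psi>: "\<psi> \<noteq> 0" "H \<psi> = l *s \<psi>"
    using assms(4) unfolding is_eigenvector_def by auto
  have "H (T \<psi>) = l *s T \<psi>"
    using commuting_antiunitary_maps_eigenvector[OF assms(3) commute \<psi>(2)]
      self_adjoint_eigenvalue_real[OF assms(1,4)] by blast
  then obtain c where Tc: "T \<psi> = c *s \<psi>"
    using simple_eigenspace_is_line \<psi> assms(1,6) unfolding self_adjoint_def by blast
  then have "cmod c = 1"
    using antiunitary_eigenvalue_unimodular[OF assms(3) \<psi>(1)] by blast
  then show False
    using assms(5) Tc unimodular_eq_exp_Arg by metis
qed

end
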